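(* Let $A$ be a commutative ring and let $(a,b)$ be a unimodular row. The following are equivalent: (1) There exist $a_0,\ldots,a_n\in A$ such that $[a,b]=\infty\cdot S(a_n)S(a_{n-1})\cdots S(a_0)$. (2) There exist $a_0,\ldots,a_n,r_0,\ldots,r_{n-1}\in A$ such that, setting $r_{-2}:=a$, $r_{-1}:=b$, $r_n:=0$, one has $r_{k-2}=a_kr_{k-1}+r_k$ for $0\le k\le n$.
   Context: A unimodular row over $A$ is $(a,b)\in A^2$ with $aA+bA=A$; $[a,b]$ denotes its class modulo multiplication by units of $A$. $\mathrm{GL}_2(A)$ acts on these classes on the right by $[u]\cdot M=[uM]$; $\infty=[1,0]$. $S(a)=\begin{pmatrix}a&1\\1&0\end{pmatrix}$. *)

theory Defs
  imports "HOL-Analysis.Analysis"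
begin

text \<open>Rows over a commutative ring are vectors of type 'a^2; 2x2 matrices are 'a^2^2
  (entry M$i$j = row i, column j).\<close>

definition row2 :: "'a::zero \<Rightarrow> 'a \<Rightarrow> 'a^2" where
  "row2 x y = vector [x, y]"

definition unimodular_row :: "'a::comm_ring_1 \<Rightarrow> 'a \<Rightarrow> bool" where
  "unimodular_row a b \<longleftrightarrow> (\<exists>x y. a * x + b * y = 1)"

definition same_class :: "'a::comm_ring_1 ^ 2 \<Rightarrow> 'a ^ 2 \<Rightarrow> bool" where
  "same_class u v \<longleftrightarrow> (\<exists>c. c dvd 1 \<and> u = c *s v)"

definition Smat :: "'a::comm_ring_1 \<Rightarrow> 'a^2^2" where
  "Smat a = vector [vector [a, 1], vector [1, 0]]"

fun Sprod :: "(nat \<Rightarrow> 'a::comm_ring_1) \<Rightarrow> nat \<Rightarrow> 'a^2^2" where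
  "Sprod f 0 = Smat (f 0)"
| "Sprod f (Suc n) = Smat (f (Suc n)) ** Sprod f n"

text \<open>infinity = [1,0]; the right action [u]\<cdot>M = [u M].\<close>
definition infty_row :: "'a::comm_ring_1 ^ 2" where
  "infty_row = row2 1 0"

end

theory Submission
  imports Defs
begin

text \<open>Since row2 x y v* S(c) = row2 (x c + y) x, multiplying by S(a_k) undoes one division
  step r_{k-2} = a_k r_{k-1} + r_k. Hence [a,b] = [c,0] S(a_n) ... S(a_0) says precisely
  that a division chain starting from a, b ends in the pair c, 0; and c must be a unit, since
  it divides both a and b.\<close>

definition remainder_seq :: "(nat \<Rightarrow> 'a::comm_ring_1) \<Rightarrow> nat \<Rightarrow> (int \<Rightarrow> 'a) \<Rightarrow> bool" where
  "remainder_seq q n r \<longleftrightarrow> (\<forall>k\<le>n. r (int k - 2) = q k * r (int k - 1) + r (int k))"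

lemma row2_eq_iff: "row2 x y = row2 x' y' \<longleftrightarrow> x = x' \<and> y = (y' :: 'a::zero)"
  by (metis row2_def vector_2)

lemma row2_nth [simp]: "row2 x y $ 1 = x" "row2 x y $ 2 = (y::'a::zero)"
  by (simp_all add: row2_def)

lemma row2_vmult_Smat: "row2 x y v* Smat c = row2 (x * c + y) (x::'a::comm_ring_1)"
  by (simp add: vec_eq_iff forall_2 vector_matrix_mult_def sum_2 Smat_def)

lemma row2_zero_vmult: "row2 c 0 v* M = c *s (infty_row v* (M::'a::comm_ring_1^2^2))"
  by (simp add: vec_eq_iff forall_2 vector_matrix_mult_def sum_2 infty_row_def)

lemma remainder_seq_Suc:
  "remainder_seq q (Suc n) r \<longleftrightarrow>
     remainder_seq q n r \<and> r (int n - 1) = q (Suc n) * r (int n) + r (int n + 1)"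
  by (auto simp: remainder_seq_def le_Suc_eq algebra_simps)

lemma remainder_seq_cong:
  "(\<And>j. j \<le> int n \<Longrightarrow> r j = r' j) \<Longrightarrow> remainder_seq q n r \<longleftrightarrow> remainder_seq q n r'"
  by (simp add: remainder_seq_def)

lemma remainder_seq_vmult_Sprod:
  assumes "remainder_seq q n r"
  shows "row2 (r (int n - 1)) (r (int n)) v* Sprod q n = row2 (r (-2)) (r (-1))"
  using assms
proof (induction n)
  case 0
  then show ?case by (simp add: remainder_seq_def row2_vmult_Smat mult.commute)
next
  case (Suc n)
  then have "row2 (r (int n)) (r (int n + 1)) v* Smat (q (Suc n)) = row2 (r (int n - 1)) (r (int n))"
    by (simp add: remainder_seq_Suc row2_vmult_Smat mult.commute)
  then show ?case
    using Suc by (simp add: remainder_seq_Suc vector_matrix_mul_assoc [symmetric] add.commute)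
qed

lemma remainder_seq_exists:
  "\<exists>r. r (int n - 1) = x \<and> r (int n) = y \<and> remainder_seq q n r"
proof (induction n arbitrary: x y)
  case 0
  show ?case
    by (rule exI [of _ "\<lambda>j. if j = 0 then y else if j = -1 then x else q 0 * x + y"])
       (simp add: remainder_seq_def)
next
  case (Suc n)
  obtain r where r: "r (int n - 1) = q (Suc n) * x + y" "r (int n) = x" "remainder_seq q n r"
    using Suc.IH by blast
  have "remainder_seq q n (r(int n + 1 := y))"
    using r(3) remainder_seq_cong [of n r "r(int n + 1 := y)"] by simp
  then have "remainder_seq q (Suc n) (r(int n + 1 := y))"
    using r by (simp add: remainder_seq_Suc)
  moreover have "(r(int n + 1 := y)) (int (Suc n) - 1) = x" "(r(int n + 1 := y)) (int (Suc n)) = y"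
    using r by simp_all
  ultimately show ?case by blast
qed

lemma row2_eq_vmult_Sprod_iff:
  "row2 a b = row2 x y v* Sprod q n \<longleftrightarrow>
     (\<exists>r. r (-2) = a \<and> r (-1) = b \<and> r (int n - 1) = x \<and> r (int n) = y \<and> remainder_seq q n r)"
  by (metis remainder_seq_exists remainder_seq_vmult_Sprod row2_eq_iff)

lemma unimodular_row_common_divisor_unit:
  assumes "unimodular_row a b" "c dvd a" "c dvd b"
  shows "c dvd 1"
  using assms unfolding unimodular_row_def by (metis dvd_add dvd_mult2)

lemma same_class_infty_vmult_iff:
  assumes "unimodular_row a b"
  shows "same_class (row2 a b) (infty_row v* M) \<longleftrightarrow> (\<exists>c. row2 a b = row2 c 0 v* M)"
proof
  assume "\<exists>c. row2 a b = row2 c 0 v* M"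
  then obtain c where c: "row2 a b = c *s (infty_row v* M)"
    by (auto simp: row2_zero_vmult)
  then have "c dvd a" "c dvd b"
    by (metis dvd_triv_left row2_nth vector_smult_component)+
  with assms c show "same_class (row2 a b) (infty_row v* M)"
    unfolding same_class_def by (blast intro: unimodular_row_common_divisor_unit)
qed (auto simp: same_class_def row2_zero_vmult)

theorem lemma3p6:
  fixes a b :: "'a::comm_ring_1"
  assumes "unimodular_row a b"
  shows "(\<exists>n::nat. \<exists>as::nat \<Rightarrow> 'a. same_class (row2 a b) (infty_row v* Sprod as n))
     \<longleftrightarrow> (\<exists>n::nat. \<exists>as::nat \<Rightarrow> 'a. \<exists>r::int \<Rightarrow> 'a.
            r (-2) = a \<and> r (-1) = b \<and> r (int n) = 0 \<and>
            (\<forall>k\<le>n. r (int k - 2) = as k * r (int k - 1) + r (int k)))"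
  unfolding same_class_infty_vmult_iff [OF assms] row2_eq_vmult_Sprod_iff
    remainder_seq_def [symmetric]
  by blast

end
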